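(* Let $v_1\ge v_2>0$, $m\in\mathbb{Z}_{\ge2}$ and $0<b<m$. A strategy profile $(X,Y)$ with $\mathbf{E}(X)=m$ and $\mathbf{E}(Y)=b$ is a Nash equilibrium of the discrete all-pay auction with valuations $v_1,v_2$ if and only if $m=v_2/2$, $b\in\left[\frac{v_2(v_2-2)}{2v_1},\frac{v_2(v_2+2)}{2v_1}\right]$, $X=U_{\mathrm{O}}^m$, and $Y=\left(1-\frac bm\right)\delta_0+\frac bm Z$ where $Z=\lambda_{\mathrm{O}}U_{\mathrm{O}}^m+\lambda_{\mathrm{E}}U_{\mathrm{E}}^m+\lambda_{\mathrm{O}\uparrow1}U_{\mathrm{O}\uparrow1}^m+\sum_{j=1}^{m-1}\lambda_jW_j^m$ with $\lambda_{\mathrm{O}},\lambda_{\mathrm{E}},\lambda_{\mathrm{O}\uparrow1},\lambda_1,\dots,\lambda_{m-1}\ge0$, $\lambda_{\mathrm{O}}+\lambda_{\mathrm{E}}+\lambda_{\mathrm{O}\uparrow1}+\sum_{j=1}^{m-1}\lambda_j=1$, $\frac{\lambda_{\mathrm{O}\uparrow1}}{m-1}-\frac{\lambda_{\mathrm{E}}}{m+1}=\frac{v_2^2}{2v_1b}-1$, and $\lambda_{\mathrm{O}}\ge\frac{v_2}{2b}\left(\frac{v_2(v_2+2)}{2v_1}+b-v_2\right)$. In this case $P^1(X,Y)=\frac{v_1-v_2}{2}+\frac{v_1}{v_2}\left(\frac{v_2}{2}-b\right)$ and $P^2(Y,X)=0$.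
   Context: Discrete all-pay auction: two players, 1 and 2, value a prize at $v_1$ and $v_2$ respectively, where $v_1\ge v_2>0$. A (mixed) strategy is a probability distribution on $\mathbb{Z}_{\ge 0}$ with finite mean, identified with a $\mathbb{Z}_{\ge0}$-valued random variable; the two players' choices are independent. If player 1 uses $X$ and player 2 uses $Y$, the expected payoffs are $P^1(X,Y)=v_1\Pr(X>Y)+\frac{v_1}{2}\Pr(X=Y)-\mathbf{E}(X)$ and $P^2(Y,X)=v_2\Pr(Y>X)+\frac{v_2}{2}\Pr(X=Y)-\mathbf{E}(Y)$. A Nash equilibrium of the all-pay auction is a pair $(X,Y)$ with $P^1(X,Y)\ge P^1(X',Y)$ and $P^2(Y,X)\ge P^2(Y',X)$ for all strategies $X',Y'$. $\delta_j$ denotes the point mass at $j$; $\lambda A+(1-\lambda)B$ denotes the mixture of distributions $A$ and $B$ (similarly for longer convex combinations). Special distributions: for $m\ge1$, $U_{\mathrm{O}}^m$ is the uniform distribution on $\{1,3,\dots,2m-1\}$; for $m\ge0$, $U_{\mathrm{E}}^m$ is the uniform distribution on $\{0,2,\dots,2m\}$; for $m\ge2$, $U_{\mathrm{O}\uparrow1}^m$ is the uniform distribution on $\{2,4,\dots,2m-2\}$; for $m\ge2$ and $1\le j\le m-1$, $W_j^m=\frac{1}{2m}\delta_0+\sum_{i=1}^{j-1}\frac1m\delta_{2i}+\frac{1}{2m}\delta_{2j}+\sum_{i=j+1}^{m}\frac1m\delta_{2i-1}$. *)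

theory Defs
  imports Complex_Main
begin

definition strategy :: "(nat \<Rightarrow> real) \<Rightarrow> bool" where
  "strategy p \<longleftrightarrow> (\<forall>n. 0 \<le> p n) \<and> p sums 1 \<and> summable (\<lambda>n. real n * p n)"

definition mean :: "(nat \<Rightarrow> real) \<Rightarrow> real" where
  "mean p = (\<Sum>n. real n * p n)"

definition prob_gt :: "(nat \<Rightarrow> real) \<Rightarrow> (nat \<Rightarrow> real) \<Rightarrow> real" where
  "prob_gt p q = (\<Sum>x. p x * (\<Sum>y<x. q y))"

definition prob_eq :: "(nat \<Rightarrow> real) \<Rightarrow> (nat \<Rightarrow> real) \<Rightarrow> real" where
  "prob_eq p q = (\<Sum>x. p x * q x)"

definition payoff :: "real \<Rightarrow> (nat \<Rightarrow> real) \<Rightarrow> (nat \<Rightarrow> real) \<Rightarrow> real" where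
  "payoff v p q = v * prob_gt p q + v / 2 * prob_eq p q - mean p"

definition nash :: "real \<Rightarrow> real \<Rightarrow> (nat \<Rightarrow> real) \<Rightarrow> (nat \<Rightarrow> real) \<Rightarrow> bool" where
  "nash v1 v2 p q \<longleftrightarrow> strategy p \<and> strategy q \<and>
     (\<forall>p'. strategy p' \<longrightarrow> payoff v1 p' q \<le> payoff v1 p q) \<and>
     (\<forall>q'. strategy q' \<longrightarrow> payoff v2 q' p \<le> payoff v2 q p)"

definition delta :: "nat \<Rightarrow> nat \<Rightarrow> real" where
  "delta j = (\<lambda>n. if n = j then 1 else 0)"

definition UO :: "nat \<Rightarrow> nat \<Rightarrow> real" where
  "UO m = (\<lambda>n. if odd n \<and> n \<le> 2*m - 1 then 1 / real m else 0)"

definition UE :: "nat \<Rightarrow> nat \<Rightarrow> real" where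
  "UE m = (\<lambda>n. if even n \<and> n \<le> 2*m then 1 / (real m + 1) else 0)"

definition UOup :: "nat \<Rightarrow> nat \<Rightarrow> real" where
  "UOup m = (\<lambda>n. if even n \<and> 2 \<le> n \<and> n \<le> 2*m - 2 then 1 / (real m - 1) else 0)"

definition W :: "nat \<Rightarrow> nat \<Rightarrow> nat \<Rightarrow> real" where
  "W m j = (\<lambda>n. if n = 0 then 1 / (2 * real m)
     else if even n \<and> n < 2*j then 1 / real m
     else if n = 2*j then 1 / (2 * real m)
     else if odd n \<and> 2*j + 1 \<le> n \<and> n \<le> 2*m - 1 then 1 / real m
     else 0)"

end

theory Submission
  imports Defs
begin

text \<open>A profile is an equilibrium iff every bid a player uses maximises the payoff \<open>u(k)\<close> of the
  pure bid \<open>k\<close> against the opponent. Player 2 secures \<open>0\<close> by bidding \<open>0\<close> and \<open>v\<^sub>2/2 - m\<close> by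
  copying \<open>X\<close>. Since \<open>Pr(X > Y) + Pr(X = Y) + Pr(Y > X) = 1\<close>, the two payoffs and the two means
  satisfy a linear identity, while averaging player 1's payoffs over the odd bids \<open>1, 3, \<dots>, 2m-1\<close>
  and using \<open>\<Sum>j=1..2m. Pr(Y \<ge> j) \<le> E Y\<close> bounds player 1's payoff from below. This forces
  \<open>P\<^sup>2 = 0\<close> and \<open>v\<^sub>2 = 2m\<close> and makes every estimate tight: the distribution function of \<open>X\<close> is
  that of \<open>U\<^sub>O\<^sup>m\<close>, and every odd bid below \<open>2m\<close> is a best reply of player 1. The latter amounts to
  linear relations between consecutive masses of \<open>Y\<close>, whose nonnegative solutions are exactly the
  stated mixtures; the bounds on \<open>b\<close> say that nonnegative weights exist.\<close>

text \<open>\<open>cdf p k\<close> is \<open>Pr(X < k)\<close>, not \<open>Pr(X \<le> k)\<close>; with this convention \<open>bid_payoff v q k\<close> is the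
  payoff of the pure bid \<open>k\<close> against \<open>q\<close>.\<close>

definition cdf :: "(nat \<Rightarrow> real) \<Rightarrow> nat \<Rightarrow> real" where
  "cdf p k = (\<Sum>y<k. p y)"

definition bid_payoff :: "real \<Rightarrow> (nat \<Rightarrow> real) \<Rightarrow> nat \<Rightarrow> real" where
  "bid_payoff v q k = v * (cdf q k + q k / 2) - real k"

lemma strategy_nonneg: "strategy p \<Longrightarrow> 0 \<le> p n"
  by (simp add: strategy_def)

lemma strategy_summable: "strategy p \<Longrightarrow> summable p"
  by (auto simp: strategy_def sums_summable)

lemma strategy_sums: "strategy p \<Longrightarrow> p sums 1"
  by (simp add: strategy_def)

lemma cdf_0 [simp]: "cdf p 0 = 0"
  by (simp add: cdf_def)

lemma cdf_Suc: "cdf p (Suc k) = cdf p k + p k"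
  by (simp add: cdf_def)

lemma cdf_nonneg: "strategy p \<Longrightarrow> 0 \<le> cdf p k"
  unfolding cdf_def by (intro sum_nonneg) (auto intro: strategy_nonneg)

lemma cdf_le_one:
  assumes "strategy p"
  shows "cdf p k \<le> 1"
proof -
  have "cdf p k \<le> suminf p"
    unfolding cdf_def using assms by (intro sum_le_suminf strategy_summable strategy_nonneg) auto
  then show ?thesis
    using sums_unique[OF strategy_sums[OF assms]] by simp
qed

lemma cdf_mono: "strategy p \<Longrightarrow> j \<le> k \<Longrightarrow> cdf p j \<le> cdf p k"
  unfolding cdf_def by (rule sum_mono2) (auto intro: strategy_nonneg)

lemma strategy_le_one: "strategy p \<Longrightarrow> p k \<le> 1"
  using cdf_le_one[of p "Suc k"] cdf_nonneg[of p k] by (simp add: cdf_Suc)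

lemma LIMSEQ_cdf: "strategy p \<Longrightarrow> cdf p \<longlonglongrightarrow> 1"
  unfolding cdf_def by (metis strategy_sums sums_def)

lemma cdf_one_imp_zero:
  assumes "strategy p" "cdf p n = 1" "n \<le> k"
  shows "p k = 0"
  using cdf_mono[OF assms(1,3)] cdf_le_one[OF assms(1), of "Suc k"] assms(2)
    strategy_nonneg[OF assms(1), of k]
  by (simp add: cdf_Suc)

lemma summable_strategy_times_bounded:
  assumes "strategy p" "\<And>k. 0 \<le> f k" "\<And>k. f k \<le> 1"
  shows "summable (\<lambda>k. p k * f k)"
proof (rule summable_comparison_test'[OF strategy_summable[OF assms(1)]])
  show "norm (p n * f n) \<le> p n" for n
    using assms strategy_nonneg[OF assms(1), of n] by (simp add: abs_mult mult_left_le)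
qed

lemma summable_prob_gt: "strategy p \<Longrightarrow> strategy q \<Longrightarrow> summable (\<lambda>x. p x * cdf q x)"
  by (rule summable_strategy_times_bounded) (auto intro: cdf_nonneg cdf_le_one)

lemma summable_prob_eq: "strategy p \<Longrightarrow> strategy q \<Longrightarrow> summable (\<lambda>x. p x * q x)"
  by (rule summable_strategy_times_bounded) (auto intro: strategy_nonneg strategy_le_one)

lemma payoff_sums_bid_payoff:
  assumes "strategy p" "strategy q"
  shows "(\<lambda>k. p k * bid_payoff v q k) sums payoff v p q"
proof -
  have "(\<lambda>k. p k * cdf q k) sums prob_gt p q"
    unfolding prob_gt_def cdf_def[symmetric] using summable_prob_gt[OF assms] by (rule summable_sums)
  moreover have "(\<lambda>k. p k * q k) sums prob_eq p q"
    unfolding prob_eq_def using summable_prob_eq[OF assms] by (rule summable_sums)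
  moreover have "(\<lambda>k. real k * p k) sums mean p"
    unfolding mean_def using assms by (intro summable_sums) (simp add: strategy_def)
  ultimately have "(\<lambda>k. v * (p k * cdf q k) + v / 2 * (p k * q k) - real k * p k) sums
        (v * prob_gt p q + v / 2 * prob_eq p q - mean p)"
    by (intro sums_diff sums_add sums_mult)
  then show ?thesis
    by (simp add: payoff_def bid_payoff_def algebra_simps)
qed

lemma strategy_delta: "strategy (delta k)"
proof -
  have "(\<lambda>n. real n * delta k n) = (\<lambda>n. if n = k then real k else 0)"
    by (auto simp: delta_def)
  then show ?thesis
    using sums_single[of k "\<lambda>_. 1::real"] sums_single[of k "\<lambda>_. real k"]
    by (auto simp: strategy_def delta_def sums_summable)
qed

lemma payoff_delta:
  assumes "strategy q"
  shows "payoff v (delta k) q = bid_payoff v q k"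
proof (rule sums_unique2[OF payoff_sums_bid_payoff[OF strategy_delta assms]])
  have "(\<lambda>n. delta k n * bid_payoff v q n) = (\<lambda>n. if n = k then bid_payoff v q k else 0)"
    by (auto simp: delta_def)
  then show "(\<lambda>n. delta k n * bid_payoff v q n) sums bid_payoff v q k"
    using sums_single[of k "\<lambda>_. bid_payoff v q k"] by simp
qed

lemma payoff_le_if_bid_payoff_le:
  assumes "strategy p" "strategy q" "\<And>k. bid_payoff v q k \<le> a"
  shows "payoff v p q \<le> a"
proof (rule sums_le[OF _ payoff_sums_bid_payoff[OF assms(1,2)]])
  show "(\<lambda>k. p k * a) sums a"
    using sums_mult2[OF strategy_sums[OF assms(1)], of a] by simp
  show "p k * bid_payoff v q k \<le> p k * a" for k
    using assms(3) strategy_nonneg[OF assms(1)] by (simp add: mult_left_mono)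
qed

lemma payoff_eq_if_bid_payoff_eq:
  assumes "strategy p" "strategy q" "\<And>k. p k \<noteq> 0 \<Longrightarrow> bid_payoff v q k = a"
  shows "payoff v p q = a"
proof (rule sums_unique2[OF payoff_sums_bid_payoff[OF assms(1,2)]])
  have "(\<lambda>k. p k * bid_payoff v q k) = (\<lambda>k. p k * a)"
    using assms(3) by (metis mult_not_zero)
  then show "(\<lambda>k. p k * bid_payoff v q k) sums a"
    using sums_mult2[OF strategy_sums[OF assms(1)], of a] by simp
qed

lemma nash_bid_payoff_le1: "nash v1 v2 p q \<Longrightarrow> bid_payoff v1 q k \<le> payoff v1 p q"
  unfolding nash_def using payoff_delta strategy_delta by metis

lemma nash_bid_payoff_le2: "nash v1 v2 p q \<Longrightarrow> bid_payoff v2 p k \<le> payoff v2 q p"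
  unfolding nash_def using payoff_delta strategy_delta by metis

lemma bid_payoff_Suc: "bid_payoff v q (Suc k) = bid_payoff v q k + v * (q k + q (Suc k)) / 2 - 1"
  by (simp add: bid_payoff_def cdf_Suc field_simps)

lemma bid_payoff_add_2:
  "bid_payoff v q (k + 2) = bid_payoff v q k + v * (q k + 2 * q (k + 1) + q (k + 2)) / 2 - 2"
  using bid_payoff_Suc[of v q k] bid_payoff_Suc[of v q "Suc k"]
  by (simp add: field_simps)

lemma partial_prob_sum:
  "(\<Sum>x<N. p x * cdf q x) + (\<Sum>x<N. p x * q x) + (\<Sum>y<N. q y * cdf p y) = cdf p N * cdf q N"
  by (induction N) (simp_all add: cdf_Suc algebra_simps)

lemma prob_gt_add_prob_eq_add_prob_gt:
  assumes "strategy p" "strategy q"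
  shows "prob_gt p q + prob_eq p q + prob_gt q p = 1"
proof -
  have "(\<lambda>N. (\<Sum>x<N. p x * cdf q x) + (\<Sum>x<N. p x * q x) + (\<Sum>y<N. q y * cdf p y))
          \<longlonglongrightarrow> prob_gt p q + prob_eq p q + prob_gt q p"
    unfolding prob_gt_def prob_eq_def
    using summable_LIMSEQ[OF summable_prob_gt[OF assms]] summable_LIMSEQ[OF summable_prob_eq[OF assms]]
      summable_LIMSEQ[OF summable_prob_gt[OF assms(2,1)]]
    by (intro tendsto_add) (simp_all add: cdf_def)
  moreover have "(\<lambda>N. cdf p N * cdf q N) \<longlonglongrightarrow> 1 * 1"
    by (intro tendsto_mult LIMSEQ_cdf assms)
  ultimately show ?thesis
    unfolding partial_prob_sum using LIMSEQ_unique by fastforce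
qed

lemma payoff_sum_identity:
  assumes "strategy p" "strategy q" "v1 > 0" "v2 > 0"
  shows "(payoff v1 p q + mean p) / v1 + (payoff v2 q p + mean q) / v2 = 1"
proof -
  have "prob_eq q p = prob_eq p q"
    by (simp add: prob_eq_def mult.commute)
  then have "(payoff v2 q p + mean q) / v2 = prob_gt q p + prob_eq p q / 2"
    using assms(4) by (simp add: payoff_def field_simps)
  moreover have "(payoff v1 p q + mean p) / v1 = prob_gt p q + prob_eq p q / 2"
    using assms(3) by (simp add: payoff_def field_simps)
  ultimately show ?thesis
    using prob_gt_add_prob_eq_add_prob_gt[OF assms(1,2)] by simp
qed

lemma payoff_self:
  assumes "strategy p"
  shows "payoff v p p = v / 2 - mean p"
proof -
  have "payoff v p p = v / 2 * (2 * prob_gt p p + prob_eq p p) - mean p"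
    by (simp add: payoff_def algebra_simps)
  also have "2 * prob_gt p p + prob_eq p p = 1"
    using prob_gt_add_prob_eq_add_prob_gt[OF assms assms] by simp
  finally show ?thesis
    by simp
qed

lemma partial_mean_eq_sum_cdf_diff:
  "(\<Sum>k<M. real k * p k) = (\<Sum>j\<in>{1..<M}. cdf p M - cdf p j)"
proof (induction M)
  case (Suc M)
  show ?case
  proof (cases "M = 0")
    case False
    have "(\<Sum>j\<in>{1..<Suc M}. cdf p (Suc M) - cdf p j)
          = (\<Sum>j\<in>{1..<M}. p M + (cdf p M - cdf p j)) + p M"
      using False by (simp add: atLeastLessThanSuc cdf_Suc algebra_simps)
    also have "\<dots> = (\<Sum>j\<in>{1..<M}. cdf p M - cdf p j) + real (M - 1) * p M + p M"
      by (simp only: sum.distrib) (simp add: algebra_simps)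
    finally show ?thesis
      using Suc False by (simp add: of_nat_diff algebra_simps)
  qed simp
qed simp

lemma sum_tail_le_mean:
  assumes "strategy p"
  shows "(\<Sum>j\<in>{1..N}. 1 - cdf p j) \<le> mean p"
proof (rule LIMSEQ_le_const2)
  show "(\<lambda>M. \<Sum>j\<in>{1..N}. cdf p M - cdf p j) \<longlonglongrightarrow> (\<Sum>j\<in>{1..N}. 1 - cdf p j)"
    by (intro tendsto_sum tendsto_diff LIMSEQ_cdf assms tendsto_const)
  show "\<exists>N'. \<forall>M\<ge>N'. (\<Sum>j\<in>{1..N}. cdf p M - cdf p j) \<le> mean p"
  proof (intro exI allI impI)
    fix M assume "M \<ge> Suc N"
    then have "(\<Sum>j\<in>{1..N}. cdf p M - cdf p j) \<le> (\<Sum>j\<in>{1..<M}. cdf p M - cdf p j)"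
      by (intro sum_mono2) (auto intro: cdf_mono assms)
    also have "\<dots> = (\<Sum>k<M. real k * p k)"
      by (rule partial_mean_eq_sum_cdf_diff[symmetric])
    also have "\<dots> \<le> mean p"
      unfolding mean_def using assms strategy_nonneg[OF assms]
      by (intro sum_le_suminf) (auto simp: strategy_def)
    finally show "(\<Sum>j\<in>{1..N}. cdf p M - cdf p j) \<le> mean p" .
  qed
qed

lemma sum_cdf_ge: "strategy p \<Longrightarrow> real N - mean p \<le> (\<Sum>j\<in>{1..N}. cdf p j)"
  using sum_tail_le_mean[of p N] by (simp add: sum_subtractf)

lemma cdf_Suc_eq_one_if_sum_cdf_eq:
  assumes "strategy p" "(\<Sum>j\<in>{1..N}. cdf p j) = real N - mean p"
  shows "cdf p (Suc N) = 1"
  using sum_cdf_ge[OF assms(1), of "Suc N"] assms(2) cdf_le_one[OF assms(1), of "Suc N"]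
  by simp

lemma eq_if_cdf_eq:
  assumes "\<And>k. cdf p k = cdf q k"
  shows "p = q"
proof
  show "p k = q k" for k
    using assms[of k] assms[of "Suc k"] by (simp add: cdf_Suc)
qed

lemma sum_pairs_from_one:
  fixes f :: "nat \<Rightarrow> real"
  shows "(\<Sum>i<n. f (2*i+1) + f (2*i+2)) = (\<Sum>j=1..2*n. f j)"
proof (induction n)
  case (Suc n)
  have "{1..2 * Suc n} = insert (2*n+2) (insert (2*n+1) {1..2*n})"
    by auto
  then show ?case
    using Suc by (simp add: add.assoc)
qed simp

lemma sum_pairs_from_zero:
  fixes f :: "nat \<Rightarrow> real"
  shows "(\<Sum>i<n. f (2*i) + f (2*i+1)) = (\<Sum>j<2*n. f j)"
proof (induction n)
  case (Suc n)
  have "{..<2 * Suc n} = insert (2*n+1) (insert (2*n) {..<2*n})"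
    by auto
  then show ?case
    using Suc by (simp add: add.assoc)
qed simp

lemma termwise_eq_if_sum_le:
  fixes f g :: "nat \<Rightarrow> real"
  assumes "\<And>i. i < n \<Longrightarrow> g i \<le> f i" "(\<Sum>i<n. f i) \<le> (\<Sum>i<n. g i)" "i < n"
  shows "f i = g i"
proof -
  have "(\<Sum>i<n. g i) = (\<Sum>i<n. f i)"
    using assms(2) sum_mono[of "{..<n}" g f] assms(1) by force
  then show ?thesis
    using sum_mono_inv[of g "{..<n}" f i] assms(1,3) by simp
qed

lemma sum_odd_numbers: "(\<Sum>i<n. real (2*i+1)) = real n ^ 2"
  by (induction n) (auto simp: power2_eq_square algebra_simps)

lemma sum_even_numbers: "(\<Sum>i<n. real (2*i)) = real n * (real n - 1)"
  by (induction n) (auto simp: algebra_simps)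

lemma sum_odd_bid_payoffs:
  "(\<Sum>i<n. bid_payoff v q (2*i+1)) = v / 2 * (\<Sum>j=1..2*n. cdf q j) - real n ^ 2"
proof -
  have "(\<Sum>i<n. bid_payoff v q (2*i+1))
          = (\<Sum>i<n. v / 2 * (cdf q (2*i+1) + cdf q (2*i+2)) - real (2*i+1))"
    by (intro sum.cong) (auto simp: bid_payoff_def cdf_Suc field_simps)
  also have "\<dots> = v / 2 * (\<Sum>i<n. cdf q (2*i+1) + cdf q (2*i+2)) - (\<Sum>i<n. real (2*i+1))"
    by (simp add: sum_subtractf sum_distrib_left)
  finally show ?thesis
    by (simp only: sum_pairs_from_one sum_odd_numbers)
qed

lemma sum_odd_bid_payoffs_ge:
  assumes "strategy q" "0 \<le> v"
  shows "v / 2 * (2 * real n - mean q) - real n ^ 2 \<le> (\<Sum>i<n. bid_payoff v q (2*i+1))"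
  unfolding sum_odd_bid_payoffs
  using mult_left_mono[OF sum_cdf_ge[OF assms(1), of "2*n"], of "v/2"] assms(2) by simp

lemma bid_payoff_bound_ge:
  assumes "strategy q" "0 \<le> v" "0 < m" "\<And>k. bid_payoff v q k \<le> a"
  shows "v - real m - v * mean q / (2 * real m) \<le> a"
proof -
  have "v / 2 * (2 * real m - mean q) - real m ^ 2 \<le> (\<Sum>i<m. a)"
    using sum_odd_bid_payoffs_ge[OF assms(1,2)] sum_mono[of "{..<m}", OF assms(4)] by (rule order_trans)
  then show ?thesis
    using assms(3) by (simp add: field_simps power2_eq_square)
qed

lemma bid_payoff_bound_tight:
  assumes "strategy q" "0 < v" "0 < m" "\<And>k. bid_payoff v q k \<le> a"
    and a: "a = v - real m - v * mean q / (2 * real m)"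
  shows "\<forall>i<m. bid_payoff v q (2*i+1) = a" and "cdf q (2*m+1) = 1"
proof -
  have ma: "real m * a = v / 2 * (2 * real m - mean q) - real m ^ 2"
    using a assms(3) by (simp add: field_simps power2_eq_square)
  have le: "(\<Sum>i<m. bid_payoff v q (2*i+1)) \<le> (\<Sum>i<m. a)"
    using assms(4) by (rule sum_mono)
  then have "(\<Sum>i<m. bid_payoff v q (2*i+1)) = (\<Sum>i<m. a)"
    using sum_odd_bid_payoffs_ge[OF assms(1), of v m] assms(2) ma by simp
  then show "\<forall>i<m. bid_payoff v q (2*i+1) = a"
    using termwise_eq_if_sum_le[where f = "\<lambda>_. a" and g = "\<lambda>i. bid_payoff v q (2*i+1)"] assms(4)
    by (metis order_refl)
  have "v / 2 * (\<Sum>j=1..2*m. cdf q j) \<le> v / 2 * (2 * real m - mean q)"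
    using le ma sum_odd_bid_payoffs[of v q m] by simp
  then have "(\<Sum>j=1..2*m. cdf q j) = real (2*m) - mean q"
    using sum_cdf_ge[OF assms(1), of "2*m"] assms(2) by simp
  then show "cdf q (2*m+1) = 1"
    using cdf_Suc_eq_one_if_sum_cdf_eq[OF assms(1)] by simp
qed

lemma nash_payoffs:
  assumes nash: "nash v1 v2 p q" and "v2 \<le> v1" "0 < v2" "0 < m" "0 < b" "b < real m"
    and mp: "mean p = real m" and mq: "mean q = b"
  shows "payoff v2 q p = 0" and "v2 = 2 * real m"
    and "payoff v1 p q = v1 - real m - v1 * b / (2 * real m)"
proof -
  define a c where "a = payoff v1 p q" and "c = payoff v2 q p"
  have sp: "strategy p" and sq: "strategy q" and v1: "0 < v1"
    using assms(1-3) by (auto simp: nash_def)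
  have copy: "v2 / 2 - real m \<le> c"
    using nash payoff_self[OF sp, of v2] mp unfolding nash_def c_def by metis
  have "0 \<le> v2 * p 0"
    using strategy_nonneg[OF sp, of 0] assms(3) by simp
  then have zero_bid: "0 \<le> c"
    using nash_bid_payoff_le2[OF nash, of 0] by (simp add: bid_payoff_def c_def)
  have "v1 - real m - v1 * b / (2 * real m) \<le> a"
    using bid_payoff_bound_ge[OF sq _ assms(4) nash_bid_payoff_le1[OF nash]] v1 mq
    by (simp add: a_def)
  then have "1 - b / (2 * real m) \<le> (a + real m) / v1"
    using v1 by (simp add: field_simps)
  moreover have id: "(a + real m) / v1 + (c + b) / v2 = 1"
    using payoff_sum_identity[OF sp sq v1 assms(3)] mp mq by (simp add: a_def c_def)
  ultimately have "(c + b) / v2 \<le> b / (2 * real m)"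
    by linarith
  then have "2 * real m * (c + b) \<le> b * v2"
    using assms(3,4) by (simp add: field_simps)
  also have "\<dots> \<le> b * (2 * real m + 2 * c)"
    using copy assms(5) by (intro mult_left_mono) auto
  finally have "c * (real m - b) \<le> 0"
    by (simp add: algebra_simps)
  then show c0: "payoff v2 q p = 0"
    using zero_bid assms(6) unfolding c_def by (smt (verit) mult_pos_pos)
  with \<open>2 * real m * (c + b) \<le> b * v2\<close> have "b * (2 * real m) \<le> b * v2"
    by (simp add: c_def algebra_simps)
  then show v2: "v2 = 2 * real m"
    using copy c0 assms(5) by (simp add: c_def)
  show "payoff v1 p q = v1 - real m - v1 * b / (2 * real m)"
    using id c0 v2 v1 assms(4) by (simp add: a_def c_def field_simps)
qed

text \<open>Applied to \<open>x j = Pr(X \<ge> j)\<close>: the lower bounds on the pair sums add up to exactly the mass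
  that \<open>E X = m\<close> allows, so all of them are attained.\<close>

lemma pair_sums_forced:
  fixes x :: "nat \<Rightarrow> real"
  assumes m: "0 < m" and x0: "x 0 = 1" and nonneg: "\<And>j. 0 \<le> x j"
    and pair: "\<And>k. 2 - real k / real m \<le> x k + x (Suc k)"
    and total: "(\<Sum>j=1..2*m. x j) \<le> real m"
  shows "x (2*m) = 0"
    and "\<forall>i<m. x (2*i) + x (2*i+1) = 2 - real (2*i) / real m"
    and "\<forall>i<m. x (2*i+1) + x (2*i+2) = 2 - real (2*i+1) / real m"
proof -
  have odd_bounds: "(\<Sum>i<m. 2 - real (2*i+1) / real m) = real m"
    unfolding sum_subtractf sum_divide_distrib[symmetric] sum_odd_numbers
    using m by (simp add: power2_eq_square)
  have even_bounds: "(\<Sum>i<m. 2 - real (2*i) / real m) = real m + 1"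
    unfolding sum_subtractf sum_divide_distrib[symmetric] sum_even_numbers
    using m by (simp add: field_simps)
  have odd_le: "(\<Sum>i<m. 2 - real (2*i+1) / real m) \<le> (\<Sum>i<m. x (2*i+1) + x (2*i+2))"
    using pair[of "2*_+1"] by (intro sum_mono) simp
  have even_le: "(\<Sum>i<m. 2 - real (2*i) / real m) \<le> (\<Sum>i<m. x (2*i) + x (2*i+1))"
    using pair[of "2*_"] by (intro sum_mono) simp
  have "(\<Sum>j<2*m. x j) + x (2*m) = x 0 + (\<Sum>j<2*m. x (Suc j))"
    unfolding sum.lessThan_Suc[symmetric] by (rule sum.lessThan_Suc_shift)
  also have "\<dots> = x 0 + (\<Sum>j=1..2*m. x j)"
    by (simp add: sum.atLeast1_atMost_eq)
  finally have split: "(\<Sum>j<2*m. x j) + x (2*m) = x 0 + (\<Sum>j=1..2*m. x j)" .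
  then show "x (2*m) = 0"
    using even_le even_bounds total x0 nonneg[of "2*m"] unfolding sum_pairs_from_zero by linarith
  then have even_eq: "(\<Sum>i<m. x (2*i) + x (2*i+1)) = (\<Sum>i<m. 2 - real (2*i) / real m)"
    using split even_le even_bounds total x0 unfolding sum_pairs_from_zero by linarith
  then show "\<forall>i<m. x (2*i) + x (2*i+1) = 2 - real (2*i) / real m"
  proof (intro allI impI)
    fix i assume "i < m"
    with even_eq show "x (2*i) + x (2*i+1) = 2 - real (2*i) / real m"
      by (intro termwise_eq_if_sum_le[where g = "\<lambda>i. 2 - real (2*i) / real m"])
        (use pair[of "2*_"] in auto)
  qed
  have odd_eq: "(\<Sum>i<m. x (2*i+1) + x (2*i+2)) = (\<Sum>i<m. 2 - real (2*i+1) / real m)"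
    using odd_le odd_bounds total unfolding sum_pairs_from_one by linarith
  then show "\<forall>i<m. x (2*i+1) + x (2*i+2) = 2 - real (2*i+1) / real m"
  proof (intro allI impI)
    fix i assume "i < m"
    with odd_eq show "x (2*i+1) + x (2*i+2) = 2 - real (2*i+1) / real m"
      by (intro termwise_eq_if_sum_le[where g = "\<lambda>i. 2 - real (2*i+1) / real m"])
        (use pair[of "2*_+1"] in auto)
  qed
qed

lemma pair_sums_values:
  fixes x :: "nat \<Rightarrow> real"
  assumes "x 0 = 1"
    and even: "\<forall>i<m. x (2*i) + x (2*i+1) = 2 - real (2*i) / real m"
    and odd: "\<forall>i<m. x (2*i+1) + x (2*i+2) = 2 - real (2*i+1) / real m"
    and "i < m"
  shows "x (2*i) = 1 - real i / real m \<and> x (2*i+1) = 1 - real i / real m"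
  using \<open>i < m\<close>
proof (induction i)
  case 0
  then show ?case
    using even assms(1) by auto
next
  case (Suc i)
  then have IH: "x (2*i+1) = 1 - real i / real m" and "real m \<noteq> 0"
    by simp_all
  have "x (2 * Suc i) = 1 - real (Suc i) / real m"
    using odd[rule_format, of i] Suc.prems IH \<open>real m \<noteq> 0\<close> by (simp add: field_simps)
  moreover from this have "x (2 * Suc i + 1) = 1 - real (Suc i) / real m"
    using even[rule_format, OF Suc.prems] \<open>real m \<noteq> 0\<close> by (simp add: field_simps)
  ultimately show ?case ..
qed

lemma cdf_UO: "0 < m \<Longrightarrow> cdf (UO m) k = real (min (k div 2) m) / real m"
proof (induction k)
  case (Suc k)
  show ?case
  proof (cases "even k")
    case True
    then have "Suc k div 2 = k div 2"
      by presburger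
    then show ?thesis
      using Suc True by (simp add: cdf_Suc UO_def)
  next
    case False
    then have "Suc k div 2 = k div 2 + 1"
      by presburger
    moreover have "UO m k = (if k div 2 < m then 1 / real m else 0)"
      using False by (auto simp: UO_def)
    ultimately show ?thesis
      using Suc by (auto simp: cdf_Suc add_divide_distrib)
  qed
qed simp

lemma UO_if_bid_payoff_nonpos:
  assumes p: "strategy p" and "mean p = real m" and m: "0 < m"
    and nonpos: "\<And>k. bid_payoff (2 * real m) p k \<le> 0"
  shows "p = UO m"
proof (rule eq_if_cdf_eq)
  define x where "x j = 1 - cdf p j" for j
  have pair: "2 - real k / real m \<le> x k + x (Suc k)" for k
    using nonpos[of k] m by (simp add: x_def bid_payoff_def cdf_Suc field_simps)
  have "(\<Sum>j=1..2*m. x j) \<le> real m"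
    using sum_tail_le_mean[OF p, of "2*m"] assms(2) by (simp add: x_def)
  moreover have "x 0 = 1" and "0 \<le> x j" for j
    using cdf_le_one[OF p] by (simp_all add: x_def)
  ultimately have forced: "x (2*m) = 0"
    "\<forall>i<m. x (2*i) + x (2*i+1) = 2 - real (2*i) / real m"
    "\<forall>i<m. x (2*i+1) + x (2*i+2) = 2 - real (2*i+1) / real m"
    using pair_sums_forced[OF m _ _ pair] by blast+
  have x_values: "x (2*i) = 1 - real i / real m \<and> x (2*i+1) = 1 - real i / real m" if "i < m" for i
    using pair_sums_values[OF _ forced(2-3) that] by (simp add: x_def)
  fix k
  show "cdf p k = cdf (UO m) k"
  proof (cases "2*m \<le> k")
    case True
    then have "cdf p k = 1"
      using cdf_mono[OF p True] cdf_le_one[OF p, of k] forced(1) by (simp add: x_def)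
    then show ?thesis
      using True m by (simp add: cdf_UO min_absorb2)
  next
    case False
    then have "k div 2 < m"
      by simp
    moreover have "k = 2 * (k div 2) \<or> k = 2 * (k div 2) + 1"
      by presburger
    ultimately show ?thesis
      using x_values[of "k div 2"] m by (auto simp: x_def cdf_UO)
  qed
qed

lemma bid_payoff_UO:
  assumes "0 < m"
  shows "bid_payoff (2 * real m) (UO m) k = (if k \<le> 2*m then 0 else 2 * real m - real k)"
proof (cases "k \<le> 2*m")
  case True
  then have UO_k: "UO m k = (if odd k then 1 / real m else 0)"
    by (auto simp: UO_def) presburger
  consider j where "k = 2*j" "j \<le> m" | j where "k = 2*j+1" "j < m"
    using True by (cases "even k") (auto elim!: evenE oddE)
  then show ?thesis
    using True assms UO_k by cases (simp_all add: bid_payoff_def cdf_UO field_simps)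
next
  case False
  moreover from this have "UO m k = 0"
    by (auto simp: UO_def)
  ultimately show ?thesis
    using assms by (simp add: bid_payoff_def cdf_UO min_absorb2)
qed

lemma nash_UO:
  assumes nash: "nash v1 v2 p q" and "v2 \<le> v1" "0 < v2" "0 < m" "0 < b" "b < real m"
    and "mean p = real m" and "mean q = b"
  shows "p = UO m"
proof (rule UO_if_bid_payoff_nonpos)
  show "strategy p"
    using nash by (simp add: nash_def)
  show "bid_payoff (2 * real m) p k \<le> 0" for k
    using nash_bid_payoff_le2[OF nash, of k] nash_payoffs[OF assms] by simp
qed (use assms in auto)

lemma bid_payoff_antimono_beyond_support:
  assumes v: "0 < v" and support: "\<And>k. n < k \<Longrightarrow> q k = 0" and "q n \<le> 2 / v" and "n \<le> k"
  shows "bid_payoff v q k \<le> bid_payoff v q n"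
  using \<open>n \<le> k\<close>
proof (induction k rule: dec_induct)
  case (step k)
  have "q k \<le> 2 / v"
    using assms(3) support[of k] step.hyps v by (cases "k = n") simp_all
  then show ?case
    using step bid_payoff_Suc[of v q k] support[of "Suc k"] v by (simp add: field_simps)
qed simp

lemma odd_bids_optimal_imp_mass_relations:
  assumes v: "0 < v" and le: "\<And>k. bid_payoff v q k \<le> a"
    and odd: "\<forall>i<m. bid_payoff v q (2*i+1) = a" and m: "0 < m"
  shows "2 / v \<le> q 0 + q 1"
    and "i < m \<Longrightarrow> q (2*i+1) + q (2*i+2) \<le> 2 / v"
    and "i + 1 < m \<Longrightarrow> q (2*i+1) + 2 * q (2*i+2) + q (2*i+3) = 4 / v"
proof -
  show "2 / v \<le> q 0 + q 1"
    using bid_payoff_Suc[of v q 0] le[of 0] odd m v by (auto simp: field_simps)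
  show "q (2*i+1) + q (2*i+2) \<le> 2 / v" if "i < m"
    using bid_payoff_Suc[of v q "2*i+1"] le[of "2*i+2"] odd that v by (simp add: field_simps)
  show "q (2*i+1) + 2 * q (2*i+2) + q (2*i+3) = 4 / v" if "i + 1 < m"
    using bid_payoff_add_2[of v q "2*i+1"] odd[rule_format, of i] odd[rule_format, of "i+1"] that v
    by (simp add: field_simps eval_nat_numeral)
qed

lemma mass_relations_imp_odd_bids_optimal:
  assumes v: "0 < v" and m: "0 < m" and nonneg: "\<And>n. 0 \<le> q n"
    and support: "\<And>k. 2*m < k \<Longrightarrow> q k = 0"
    and low: "2 / v \<le> q 0 + q 1"
    and pairs: "\<And>i. i < m \<Longrightarrow> q (2*i+1) + q (2*i+2) \<le> 2 / v"
    and triples: "\<And>i. i + 1 < m \<Longrightarrow> q (2*i+1) + 2 * q (2*i+2) + q (2*i+3) = 4 / v"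
  shows "\<forall>i<m. bid_payoff v q (2*i+1) = bid_payoff v q 1"
    and "bid_payoff v q k \<le> bid_payoff v q 1"
proof -
  have odd: "bid_payoff v q (2*i+1) = bid_payoff v q 1" if "i < m" for i
    using that
  proof (induction i)
    case (Suc i)
    then show ?case
      using bid_payoff_add_2[of v q "2*i+1"] triples[of i] v by (simp add: eval_nat_numeral)
  qed simp
  then show "\<forall>i<m. bid_payoff v q (2*i+1) = bid_payoff v q 1"
    by blast
  have even: "bid_payoff v q (2*i+2) \<le> bid_payoff v q 1" if "i < m" for i
    using bid_payoff_Suc[of v q "2*i+1"] pairs[OF that] odd[OF that] v by (simp add: field_simps)
  have "q (2*m) \<le> 2 / v"
    using pairs[of "m-1"] nonneg[of "2*(m-1)+1"] m by (simp add: mult_2 Suc_diff_Suc)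
  then have tail: "bid_payoff v q k \<le> bid_payoff v q (2*m)" if "2*m \<le> k" for k
    using bid_payoff_antimono_beyond_support[OF v _ _ that] support by blast
  show "bid_payoff v q k \<le> bid_payoff v q 1"
  proof (cases "2*m \<le> k")
    case True
    then show ?thesis
      using tail[OF True] even[of "m-1"] m by (simp add: mult_2 Suc_diff_Suc)
  next
    case False
    then consider "k = 0" | i where "k = 2*i+1" "i < m" | i where "k = 2*i+2" "i < m"
    proof (cases "even k")
      case True
      moreover have "k = 0 \<or> k = 2 * (k div 2 - 1) + 2"
        using True by presburger
      ultimately show thesis
        using that False by fastforce
    qed (use that in \<open>auto elim!: oddE\<close>)
    then show ?thesis
    proof cases
      case 1
      then show ?thesis
        using bid_payoff_Suc[of v q 0] low v by (simp add: field_simps)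
    qed (use odd even in auto)
  qed
qed

definition mixture_Y :: "real \<Rightarrow> nat \<Rightarrow> real \<Rightarrow> real \<Rightarrow> real \<Rightarrow> (nat \<Rightarrow> real) \<Rightarrow> nat \<Rightarrow> real" where
  "mixture_Y b m lO lE lU l = (\<lambda>n. (1 - b / real m) * delta 0 n + b / real m *
     (lO * UO m n + lE * UE m n + lU * UOup m n + (\<Sum>j=1..m-1. l j * W m j n)))"

lemma sum_W_0: "(\<Sum>j=1..m-1. l j * W m j 0) = (\<Sum>j=1..m-1. l j) / (2 * real m)"
  by (simp add: W_def sum_divide_distrib)

lemma sum_W_odd:
  assumes "i < m"
  shows "(\<Sum>j=1..m-1. l j * W m j (2*i+1)) = (\<Sum>j=1..i. l j) / real m"
proof -
  have "(\<Sum>j=1..m-1. l j * W m j (2*i+1)) = (\<Sum>j\<in>{1..m-1}. if j \<le> i then l j / real m else 0)"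
    using assms by (intro sum.cong) (auto simp: W_def)
  also have "\<dots> = (\<Sum>j\<in>{1..i}. l j / real m)"
    using assms by (simp add: sum.inter_filter[symmetric]) (intro sum.cong; auto)
  finally show ?thesis
    by (simp add: sum_divide_distrib)
qed

lemma sum_W_even:
  assumes "1 \<le> i" "i \<le> m - 1"
  shows "(\<Sum>j=1..m-1. l j * W m j (2*i)) = (\<Sum>j=i+1..m-1. l j) / real m + l i / (2 * real m)"
proof -
  have "(\<Sum>j=1..m-1. l j * W m j (2*i)) =
        (\<Sum>j\<in>{1..m-1}. if i < j then l j / real m else 0) + (\<Sum>j\<in>{1..m-1}. if j = i then l i / (2 * real m) else 0)"
    using assms by (subst sum.distrib[symmetric], intro sum.cong) (auto simp: W_def)
  also have "\<dots> = (\<Sum>j\<in>{i+1..m-1}. l j / real m) + l i / (2 * real m)"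
    using assms by (simp add: sum.inter_filter[symmetric]) (intro sum.cong; auto)
  finally show ?thesis
    by (simp add: sum_divide_distrib)
qed

lemma sum_W_beyond: "2*m \<le> n \<Longrightarrow> (\<Sum>j=1..m-1. l j * W m j n) = 0"
  by (intro sum.neutral) (auto simp: W_def)

context
  fixes m :: nat and b lO lE lU :: real and l :: "nat \<Rightarrow> real"
  assumes m: "2 \<le> m"
begin

lemma mixture_Y_0:
  "mixture_Y b m lO lE lU l 0
     = 1 - b / real m + b / real m * (lE / (real m + 1) + (\<Sum>j=1..m-1. l j) / (2 * real m))"
  unfolding mixture_Y_def sum_W_0 by (simp add: delta_def UO_def UE_def UOup_def)

lemma mixture_Y_odd:
  assumes "i < m"
  shows "mixture_Y b m lO lE lU l (2*i+1) = b / real m * (lO / real m + (\<Sum>j=1..i. l j) / real m)"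
proof -
  have "2*i+1 \<le> 2*m - 1"
    using assms by simp
  then show ?thesis
    unfolding mixture_Y_def sum_W_odd[OF assms] by (simp add: delta_def UO_def UE_def UOup_def)
qed

lemma mixture_Y_even:
  assumes "1 \<le> i" "i < m"
  shows "mixture_Y b m lO lE lU l (2*i) = b / real m *
    (lE / (real m + 1) + lU / (real m - 1) + (\<Sum>j=i+1..m-1. l j) / real m + l i / (2 * real m))"
proof -
  have "2*i \<le> 2*m - 2" "2 \<le> 2*i" "real (m - 1) = real m - 1" "i \<le> m - 1" "i \<le> m"
    using assms by auto
  then show ?thesis
    unfolding mixture_Y_def sum_W_even[OF assms(1) \<open>i \<le> m - 1\<close>]
    by (simp add: delta_def UO_def UE_def UOup_def)
qed

lemma mixture_Y_2m: "mixture_Y b m lO lE lU l (2*m) = b / real m * (lE / (real m + 1))"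
proof -
  have "\<not> 2*m \<le> 2*m - 2" "\<not> 2*m \<le> 2*m - 1" "2*m \<noteq> 0"
    using m by auto
  then show ?thesis
    unfolding mixture_Y_def sum_W_beyond[OF order_refl] by (simp add: delta_def UO_def UE_def UOup_def)
qed

lemma mixture_Y_beyond:
  assumes "2*m < n"
  shows "mixture_Y b m lO lE lU l n = 0"
proof -
  have "\<not> n \<le> 2*m - 2" "\<not> n \<le> 2*m - 1" "\<not> n \<le> 2*m" "n \<noteq> 0"
    using assms by auto
  then show ?thesis
    unfolding mixture_Y_def sum_W_beyond[OF less_imp_le[OF assms]]
    by (simp add: delta_def UO_def UE_def UOup_def)
qed

lemma mixture_Y_odd_diff:
  assumes "i + 1 < m"
  shows "mixture_Y b m lO lE lU l (2*i+3) - mixture_Y b m lO lE lU l (2*i+1) = b / real m ^ 2 * l (i+1)"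
  using mixture_Y_odd[of i] mixture_Y_odd[of "i+1"] assms
  by (simp add: eval_nat_numeral field_simps power2_eq_square)

end

context
  fixes m :: nat and v1 v2 b lO lE lU :: real and l :: "nat \<Rightarrow> real"
  assumes m: "2 \<le> m" and v1: "0 < v1" and b: "0 < b" and v2: "v2 = 2 * real m"
    and total: "lO + lE + lU + (\<Sum>j=1..m-1. l j) = 1"
    and gap: "lU / (real m - 1) - lE / (real m + 1) = v2^2 / (2 * v1 * b) - 1"
begin

abbreviation Y :: "nat \<Rightarrow> real" where
  "Y \<equiv> mixture_Y b m lO lE lU l"

lemma weights_identity:
  "(lO + (\<Sum>j=1..m-1. l j)) / real m + lE / (real m + 1) + lU / (real m - 1) = 2 * real m / (v1 * b)"
proof -
  define M A B where "M = real m" and "A = lU / (M - 1)" and "B = lE / (M + 1)"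
  have "M > 1" "v1 \<noteq> 0" "b \<noteq> 0"
    using m v1 b by (auto simp: M_def)
  then have "lO + (\<Sum>j=1..m-1. l j) = 1 - (M + 1) * B - (M - 1) * A"
    using total by (simp add: A_def B_def)
  moreover have "A - B = 2 * M^2 / (v1 * b) - 1"
    using gap v2 by (simp add: A_def B_def M_def power_mult_distrib)
  ultimately show ?thesis
    using \<open>M > 1\<close> \<open>v1 \<noteq> 0\<close> \<open>b \<noteq> 0\<close>
    by (simp add: A_def[symmetric] B_def[symmetric] M_def[symmetric]) (simp add: field_simps power2_eq_square)
qed

lemma mixture_Y_triple:
  assumes "i + 1 < m"
  shows "Y (2*i+1) + 2 * Y (2*i+2) + Y (2*i+3) = 4 / v1"
proof -
  define A B L S T where "A = lU / (real m - 1)" and "B = lE / (real m + 1)"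
    and "L = (\<Sum>j=1..m-1. l j)" and "S = (\<Sum>j=1..i. l j)" and "T = (\<Sum>j=i+2..m-1. l j)"
  have "{1..m-1} = {1..i+1} \<union> {i+2..m-1}"
    using assms by auto
  then have L: "L = S + l (i+1) + T"
    by (simp add: L_def S_def T_def sum.union_disjoint)
  have e1: "Y (2*i+1) = b / real m * (lO / real m + S / real m)"
    using mixture_Y_odd[OF m] assms by (simp add: S_def)
  have e2: "Y (2*i+2) = b / real m * (B + A + T / real m + l (i+1) / (2 * real m))"
    using mixture_Y_even[OF m, of "i+1"] assms by (simp add: A_def B_def T_def mult_2_right)
  have e3: "Y (2*i+3) = b / real m * (lO / real m + (S + l (i+1)) / real m)"
    using mixture_Y_odd[OF m, of "i+1"] assms by (simp add: S_def eval_nat_numeral)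
  have "real m \<noteq> 0"
    using m by simp
  then have "Y (2*i+1) + 2 * Y (2*i+2) + Y (2*i+3)
      = 2 * (b / real m) * ((lO + L) / real m + B + A)"
    unfolding e1 e2 e3 L by (simp add: field_simps)
  also have "\<dots> = 4 / v1"
    unfolding A_def B_def L_def weights_identity using \<open>real m \<noteq> 0\<close> b by (simp add: field_simps)
  finally show ?thesis .
qed

lemma mixture_Y_top: "Y (2*(m-1)+1) + Y (2*(m-1)+2) = 2 / v1 - b / real m * (lU / (real m - 1))"
proof -
  define A B L where "A = lU / (real m - 1)" and "B = lE / (real m + 1)" and "L = (\<Sum>j=1..m-1. l j)"
  have "2*(m-1)+2 = 2*m" "m - 1 < m" and nz: "real m \<noteq> 0"
    using m by auto
  then have e1: "Y (2*(m-1)+1) = b / real m * (lO / real m + L / real m)"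
    and e2: "Y (2*(m-1)+2) = b / real m * B"
    using mixture_Y_odd[OF m, of "m-1"] mixture_Y_2m[OF m] by (simp_all add: B_def L_def)
  have K: "(lO + L) / real m + B = 2 * real m / (v1 * b) - A"
    using weights_identity by (simp add: A_def B_def L_def)
  have "Y (2*(m-1)+1) + Y (2*(m-1)+2) = b / real m * ((lO + L) / real m + B)"
    unfolding e1 e2 using nz by (simp add: field_simps)
  also have "\<dots> = 2 / v1 - b / real m * A"
    unfolding K using nz b v1 by (simp add: field_simps)
  finally show ?thesis
    by (simp add: A_def)
qed

lemma mixture_Y_low: "Y 0 + Y 1 / 2 = 1 - b / (2 * real m) - (real m - 1) / v1"
proof -
  define A B L where "A = lU / (real m - 1)" and "B = lE / (real m + 1)" and "L = (\<Sum>j=1..m-1. l j)"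
  have nz: "real m \<noteq> 0" "real m - 1 \<noteq> 0" "real m + 1 \<noteq> 0" "v1 \<noteq> 0" "b \<noteq> 0"
    using m v1 b by auto
  have e0: "Y 0 = 1 - b / real m + b / real m * (B + L / (2 * real m))"
    using mixture_Y_0[OF m] by (simp add: B_def L_def)
  have e1: "Y 1 = b / real m * (lO / real m)"
    using mixture_Y_odd[OF m, of 0] m by simp
  have L: "L = 1 - lO - (real m + 1) * B - (real m - 1) * A"
    using total nz by (simp add: A_def B_def L_def)
  have A: "A = B + 2 * real m ^ 2 / (v1 * b) - 1"
    using gap v2 by (simp add: A_def B_def power_mult_distrib mult.commute)
  show ?thesis
    unfolding e0 e1 L A using nz by (simp add: field_simps power2_eq_square)
qed

lemma mixture_Y_low_iff:
  "2 / v1 \<le> Y 0 + Y 1 \<longleftrightarrow> v2 / (2 * b) * (v2 * (v2 + 2) / (2 * v1) + b - v2) \<le> lO"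
proof -
  have nz: "0 < real m" "0 < b" "0 < v1"
    using m b v1 by auto
  have "Y 1 = b * lO / real m ^ 2"
    using mixture_Y_odd[OF m, of 0] m by (simp add: power2_eq_square)
  then have "Y 0 + Y 1 = 1 - b / (2 * real m) - (real m - 1) / v1 + b * lO / (2 * real m ^ 2)"
    using mixture_Y_low by simp
  moreover have "(real m + 1) / v1 = (real m - 1) / v1 + 2 / v1"
    using nz by (simp add: field_simps)
  ultimately have "2 / v1 \<le> Y 0 + Y 1 \<longleftrightarrow> (real m + 1) / v1 - 1 + b / (2 * real m) \<le> b * lO / (2 * real m ^ 2)"
    by linarith
  also have "\<dots> \<longleftrightarrow> 2 * real m ^ 2 / b * ((real m + 1) / v1 - 1 + b / (2 * real m)) \<le> lO"
    using nz by (simp add: field_simps)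
  also have "2 * real m ^ 2 / b * ((real m + 1) / v1 - 1 + b / (2 * real m))
      = v2 / (2 * b) * (v2 * (v2 + 2) / (2 * v1) + b - v2)"
    using nz v2 by (simp add: field_simps power2_eq_square)
  finally show ?thesis .
qed

lemma mixture_Y_pair_iff:
  assumes "i < m"
  shows "Y (2*i+1) + Y (2*i+2) \<le> 2 / v1 \<longleftrightarrow> (if i + 1 < m then 0 \<le> l (i+1) else 0 \<le> lU)"
proof (cases "i + 1 < m")
  case True
  have "Y (2*i+1) + Y (2*i+2) \<le> 2 / v1 \<longleftrightarrow> 0 \<le> Y (2*i+3) - Y (2*i+1)"
    using mixture_Y_triple[OF True] by linarith
  also have "\<dots> \<longleftrightarrow> 0 \<le> l (i+1)"
    unfolding mixture_Y_odd_diff[OF m True] using b m by (simp add: zero_le_mult_iff zero_le_divide_iff)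
  finally show ?thesis
    using True by simp
next
  case False
  then have "i = m - 1"
    using assms by simp
  moreover have "0 < b / real m / (real m - 1)"
    using b m by simp
  then have "0 \<le> b / real m * (lU / (real m - 1)) \<longleftrightarrow> 0 \<le> lU"
    using mult_le_cancel_left_pos[of "b / real m / (real m - 1)" 0 lU] by simp
  ultimately show ?thesis
    using mixture_Y_top False by simp
qed

lemma mixture_Y_pairs_iff:
  "(\<forall>i<m. Y (2*i+1) + Y (2*i+2) \<le> 2 / v1) \<longleftrightarrow> 0 \<le> lU \<and> (\<forall>j\<in>{1..m-1}. 0 \<le> l j)"
proof -
  have "(\<forall>i<m. Y (2*i+1) + Y (2*i+2) \<le> 2 / v1)
      \<longleftrightarrow> (\<forall>i<m. if i + 1 < m then 0 \<le> l (i+1) else 0 \<le> lU)"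
    using mixture_Y_pair_iff by simp
  also have "\<dots> \<longleftrightarrow> 0 \<le> lU \<and> (\<forall>j\<in>{1..m-1}. 0 \<le> l j)"
  proof
    assume H: "\<forall>i<m. if i + 1 < m then 0 \<le> l (i+1) else 0 \<le> lU"
    have "0 \<le> lU"
      using H[rule_format, of "m-1"] m by simp
    moreover have "0 \<le> l j" if "j \<in> {1..m-1}" for j
    proof -
      have "j - 1 < m" "j - 1 + 1 = j" "j < m"
        using that m by auto
      then show ?thesis
        using H[rule_format, of "j-1"] by simp
    qed
    ultimately show "0 \<le> lU \<and> (\<forall>j\<in>{1..m-1}. 0 \<le> l j)"
      by blast
  qed auto
  finally show ?thesis .
qed

lemma weights_bounds:
  assumes "0 \<le> lO" "0 \<le> lE" "0 \<le> lU" "\<forall>j\<in>{1..m-1}. 0 \<le> l j"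
  shows "v2 * (v2 - 2) / (2 * v1) \<le> b" and "b \<le> v2 * (v2 + 2) / (2 * v1)"
proof -
  have "0 \<le> (\<Sum>j=1..m-1. l j)"
    using assms(4) by (intro sum_nonneg) auto
  then have "lU \<le> 1" "lE \<le> 1"
    using total assms by linarith+
  have pos: "1 < real m" "0 < v1 * b"
    using m v1 b by auto
  have g: "2 * real m ^ 2 / (v1 * b) = 1 + lU / (real m - 1) - lE / (real m + 1)"
    using gap v2 by (simp add: power_mult_distrib mult.commute)
  have "lU / (real m - 1) \<le> 1 / (real m - 1)" "0 \<le> lE / (real m + 1)"
    using \<open>lU \<le> 1\<close> assms(2) pos by (simp_all add: divide_right_mono)
  then have "2 * real m ^ 2 / (v1 * b) \<le> 1 + 1 / (real m - 1)"
    unfolding g by linarith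
  also have "\<dots> = real m / (real m - 1)"
    using pos by (simp add: field_simps)
  finally have "2 * real m ^ 2 / (v1 * b) \<le> real m / (real m - 1)" .
  then have "real m * (2 * real m * (real m - 1)) \<le> real m * (v1 * b)"
    using pos by (simp add: field_simps power2_eq_square)
  then have "2 * real m * (real m - 1) \<le> v1 * b"
    using pos mult_le_cancel_left_pos[of "real m"] by simp
  then show "v2 * (v2 - 2) / (2 * v1) \<le> b"
    using v1 v2 by (simp add: field_simps)
  have "lE / (real m + 1) \<le> 1 / (real m + 1)" "0 \<le> lU / (real m - 1)"
    using \<open>lE \<le> 1\<close> assms(3) pos by (simp_all add: divide_right_mono)
  then have "1 - 1 / (real m + 1) \<le> 2 * real m ^ 2 / (v1 * b)"
    unfolding g by linarith
  moreover have "1 - 1 / (real m + 1) = real m / (real m + 1)"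
    using pos by (simp add: field_simps)
  ultimately have "real m / (real m + 1) \<le> 2 * real m ^ 2 / (v1 * b)"
    by simp
  then have "real m * (v1 * b) \<le> real m * (2 * real m * (real m + 1))"
    using pos by (simp add: field_simps power2_eq_square)
  then have "v1 * b \<le> 2 * real m * (real m + 1)"
    using pos mult_le_cancel_left_pos[of "real m"] by simp
  then show "b \<le> v2 * (v2 + 2) / (2 * v1)"
    using v1 v2 by (simp add: field_simps)
qed

lemma eq_mixture_Y:
  assumes support: "\<And>k. 2*m < k \<Longrightarrow> q k = 0"
    and triples: "\<And>i. i + 1 < m \<Longrightarrow> q (2*i+1) + 2 * q (2*i+2) + q (2*i+3) = 4 / v1"
    and low: "q 0 + q 1 / 2 = 1 - b / (2 * real m) - (real m - 1) / v1"
    and odd: "\<And>i. i < m \<Longrightarrow> q (2*i+1) = Y (2*i+1)"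
    and top: "q (2*m) = Y (2*m)"
  shows "q = Y"
proof
  fix n
  consider "2*m < n" | "n = 2*m" | "n = 0" | i where "n = 2*i+1" "i < m"
    | i where "n = 2*i+2" "i + 1 < m"
  proof -
    have "2*m < n \<or> n = 2*m \<or> n = 0 \<or> (\<exists>i. n = 2*i+1 \<and> i < m) \<or> (\<exists>i. n = 2*i+2 \<and> i + 1 < m)"
      by presburger
    then show thesis
      using that by blast
  qed
  then show "q n = Y n"
  proof cases
    case 1
    then show ?thesis
      using support mixture_Y_beyond[OF m] by simp
  next
    case 3
    then show ?thesis
      using low mixture_Y_low odd[of 0] m by simp
  next
    case (5 i)
    then show ?thesis
      using triples[OF 5(2)] mixture_Y_triple[OF 5(2)] odd[of i] odd[of "i+1"]
      by (simp add: eval_nat_numeral)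
  qed (use top odd in auto)
qed

end

lemma mixture_Y_exists:
  assumes m: "2 \<le> m" and v1: "0 < v1" and b: "0 < b" and v2: "v2 = 2 * real m"
    and support: "\<And>k. 2*m < k \<Longrightarrow> q k = 0"
    and triples: "\<And>i. i + 1 < m \<Longrightarrow> q (2*i+1) + 2 * q (2*i+2) + q (2*i+3) = 4 / v1"
    and low: "q 0 + q 1 / 2 = 1 - b / (2 * real m) - (real m - 1) / v1"
    and top: "q (2*(m-1)+1) + 2 * q (2*m) = b / real m - 2 * (real m - 1) / v1"
  shows "\<exists>lO lE lU l. lO + lE + lU + (\<Sum>j=1..m-1. l j) = 1 \<and>
           lU / (real m - 1) - lE / (real m + 1) = v2^2 / (2 * v1 * b) - 1 \<and>
           q = mixture_Y b m lO lE lU l"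
proof (intro exI conjI)
  have nz: "real m \<noteq> 0" "real m - 1 \<noteq> 0" "real m + 1 \<noteq> 0" "b \<noteq> 0" "v1 \<noteq> 0"
    using m b v1 by auto
  define lO where "lO = real m ^ 2 * q 1 / b"
  define l where "l j = real m ^ 2 * (q (2*j+1) - q (2*j-1)) / b" for j
  define lE where "lE = real m * (real m + 1) * q (2*m) / b"
  define lU where "lU = (real m - 1) * (v2^2 / (2 * v1 * b) - 1 + lE / (real m + 1))"
  have lE_frac: "lE / (real m + 1) = real m * q (2*m) / b"
    using nz by (simp add: lE_def)
  have telescope: "lO + (\<Sum>j=1..i. l j) = real m ^ 2 * q (2*i+1) / b" for i
    by (induction i) (simp_all add: lO_def l_def diff_divide_distrib right_diff_distrib)
  show gap: "lU / (real m - 1) - lE / (real m + 1) = v2^2 / (2 * v1 * b) - 1"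
    using nz by (simp add: lU_def)
  show total: "lO + lE + lU + (\<Sum>j=1..m-1. l j) = 1"
  proof -
    have "lO + lE + lU + (\<Sum>j=1..m-1. l j) = real m ^ 2 * q (2*(m-1)+1) / b + lE + lU"
      using telescope[of "m-1"] by simp
    also have "\<dots> = real m ^ 2 / b * (q (2*(m-1)+1) + 2 * q (2*m))
        + 2 * real m ^ 2 * (real m - 1) / (v1 * b) - (real m - 1)"
      unfolding lU_def lE_frac unfolding lE_def v2 using nz by (simp add: field_simps power2_eq_square)
    also have "\<dots> = 1"
      unfolding top using nz by (simp add: field_simps power2_eq_square)
    finally show ?thesis .
  qed
  show "q = mixture_Y b m lO lE lU l"
  proof (rule eq_mixture_Y[OF m v1 b v2 total gap support triples low])
    show "q (2*i+1) = mixture_Y b m lO lE lU l (2*i+1)" if "i < m" for i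
      unfolding mixture_Y_odd[OF m that] using telescope[of i] nz
      by (simp add: field_simps power2_eq_square)
    show "q (2*m) = mixture_Y b m lO lE lU l (2*m)"
      unfolding mixture_Y_2m[OF m] lE_frac using nz by simp
  qed
qed

lemma bid_payoff_odd_values:
  assumes v: "0 < v" and m: "0 < m"
    and odd: "\<forall>i<m. bid_payoff v q (2*i+1) = v - real m - v * b / (2 * real m)"
    and cdf: "cdf q (2*m+1) = 1"
  shows "q 0 + q 1 / 2 = 1 - b / (2 * real m) - (real m - 1) / v"
    and "q (2*(m-1)+1) + 2 * q (2*m) = b / real m - 2 * (real m - 1) / v"
proof -
  have nz: "real m \<noteq> 0" "v \<noteq> 0"
    using v m by auto
  show "q 0 + q 1 / 2 = 1 - b / (2 * real m) - (real m - 1) / v"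
    using odd[rule_format, of 0] m nz by (simp add: bid_payoff_def cdf_def field_simps)
  have "2*m+1 = Suc (Suc (2*(m-1)+1))" "2*m = Suc (2*(m-1)+1)"
    using m by simp_all
  then have c: "cdf q (2*(m-1)+1) = 1 - q (2*(m-1)+1) - q (2*m)"
    using cdf by (simp add: cdf_Suc)
  have r: "real (2*(m-1)+1) = 2 * real m - 1"
    using m by (simp add: of_nat_diff)
  have "bid_payoff v q (2*(m-1)+1) = v * (1 - q (2*(m-1)+1) / 2 - q (2*m)) - (2 * real m - 1)"
    unfolding bid_payoff_def c r by (simp add: algebra_simps)
  then have "v * (1 - q (2*(m-1)+1) / 2 - q (2*m)) - (2 * real m - 1) = v - real m - v * b / (2 * real m)"
    using odd[rule_format, of "m-1"] m by simp
  then show "q (2*(m-1)+1) + 2 * q (2*m) = b / real m - 2 * (real m - 1) / v"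
    using nz by (simp add: field_simps)
qed

definition admissible_weights ::
    "real \<Rightarrow> real \<Rightarrow> real \<Rightarrow> nat \<Rightarrow> real \<Rightarrow> real \<Rightarrow> real \<Rightarrow> (nat \<Rightarrow> real) \<Rightarrow> bool" where
  "admissible_weights v1 v2 b m lO lE lU l \<longleftrightarrow>
     0 \<le> lO \<and> 0 \<le> lE \<and> 0 \<le> lU \<and> (\<forall>j\<in>{1..m-1}. 0 \<le> l j) \<and>
     lO + lE + lU + (\<Sum>j=1..m-1. l j) = 1 \<and>
     lU / (real m - 1) - lE / (real m + 1) = v2^2 / (2 * v1 * b) - 1 \<and>
     v2 / (2 * b) * (v2 * (v2 + 2) / (2 * v1) + b - v2) \<le> lO"

lemma nash_imp_admissible_weights:
  assumes nash: "nash v1 v2 p q" and "v2 \<le> v1" "0 < v2" and m: "2 \<le> m" and b: "0 < b" "b < real m"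
    and "mean p = real m" and mq: "mean q = b"
  shows "\<exists>lO lE lU l. admissible_weights v1 v2 b m lO lE lU l \<and> q = mixture_Y b m lO lE lU l"
proof -
  have m0: "0 < m" and v1: "0 < v1"
    using assms by auto
  have sq: "strategy q"
    using nash by (simp add: nash_def)
  note payoffs = nash_payoffs[OF nash assms(2,3) m0 b assms(7) mq]
  define a where "a = payoff v1 p q"
  have le: "\<And>k. bid_payoff v1 q k \<le> a"
    using nash_bid_payoff_le1[OF nash] by (simp add: a_def)
  have a: "a = v1 - real m - v1 * mean q / (2 * real m)"
    using payoffs(3) mq by (simp add: a_def)
  note tight = bid_payoff_bound_tight[OF sq v1 m0 le a]
  have support: "\<And>k. 2*m < k \<Longrightarrow> q k = 0"
    using cdf_one_imp_zero[OF sq tight(2)] by simp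
  note optimal = odd_bids_optimal_imp_mass_relations[OF v1 le tight(1) m0]
  note extremes = bid_payoff_odd_values[OF v1 m0 _ tight(2)] tight(1) a mq
  obtain lO lE lU l where total: "lO + lE + lU + (\<Sum>j=1..m-1. l j) = 1"
    and gap: "lU / (real m - 1) - lE / (real m + 1) = v2^2 / (2 * v1 * b) - 1"
    and q: "q = mixture_Y b m lO lE lU l"
    using mixture_Y_exists[OF m v1 b(1) payoffs(2) support optimal(3)] extremes by auto
  note weights = mixture_Y_low_iff[OF m v1 b(1) payoffs(2) total gap]
    mixture_Y_pairs_iff[OF m v1 b(1) payoffs(2) total gap]
  have "q 1 = b / real m * (lO / real m)" "q (2*m) = b / real m * (lE / (real m + 1))"
    using q m mixture_Y_odd[OF m, of 0] mixture_Y_2m[OF m] by simp_all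
  then have "0 \<le> b / real m * (lO / real m)" "0 \<le> b / real m * (lE / (real m + 1))"
    using strategy_nonneg[OF sq] by metis+
  moreover have "0 < b" "0 < real m * real m" "0 < real m * (real m + 1)"
    using b m by auto
  ultimately have "0 \<le> lO" "0 \<le> lE"
    by (auto simp: zero_le_mult_iff zero_le_divide_iff)
  then show ?thesis
    unfolding admissible_weights_def using total gap q weights optimal(1,2) by auto
qed

lemma admissible_weights_imp_nash:
  assumes m: "2 \<le> m" and v1: "0 < v1" and b: "0 < b" and v2: "v2 = 2 * real m"
    and sp: "strategy p" and sq: "strategy q" and p: "p = UO m"
    and weights: "admissible_weights v1 v2 b m lO lE lU l" and q: "q = mixture_Y b m lO lE lU l"
  shows "nash v1 v2 p q"
proof -
  have m0: "0 < m"
    using m by simp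
  from weights have total: "lO + lE + lU + (\<Sum>j=1..m-1. l j) = 1"
    and gap: "lU / (real m - 1) - lE / (real m + 1) = v2^2 / (2 * v1 * b) - 1"
    by (simp_all add: admissible_weights_def)
  have support: "\<And>k. 2*m < k \<Longrightarrow> q k = 0"
    using mixture_Y_beyond[OF m] q by simp
  have low: "2 / v1 \<le> q 0 + q 1"
    using mixture_Y_low_iff[OF m v1 b v2 total gap] weights q by (simp add: admissible_weights_def)
  have pairs: "\<And>i. i < m \<Longrightarrow> q (2*i+1) + q (2*i+2) \<le> 2 / v1"
    using mixture_Y_pairs_iff[OF m v1 b v2 total gap] weights q by (simp add: admissible_weights_def)
  have triples: "\<And>i. i + 1 < m \<Longrightarrow> q (2*i+1) + 2 * q (2*i+2) + q (2*i+3) = 4 / v1"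
    using mixture_Y_triple[OF m v1 b v2 total gap] q by simp
  note best = mass_relations_imp_odd_bids_optimal[where q = q, OF v1 m0 strategy_nonneg[OF sq] support low pairs triples]
  have "payoff v1 p q = bid_payoff v1 q 1"
  proof (rule payoff_eq_if_bid_payoff_eq[OF sp sq])
    fix k
    assume "p k \<noteq> 0"
    then have "odd k" "k \<le> 2*m - 1"
      by (auto simp: p UO_def split: if_splits)
    then obtain i where "k = 2*i+1" "i < m"
      by (auto elim!: oddE)
    then show "bid_payoff v1 q k = bid_payoff v1 q 1"
      using best(1) by simp
  qed
  moreover have "payoff v2 q p = 0"
  proof (rule payoff_eq_if_bid_payoff_eq[OF sq sp])
    fix k
    assume "q k \<noteq> 0"
    then have "k \<le> 2*m"
      using support by (meson not_le)
    then show "bid_payoff v2 p k = 0"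
      using bid_payoff_UO[OF m0] unfolding p v2 by simp
  qed
  ultimately show ?thesis
    unfolding nash_def using sp sq best(2) bid_payoff_UO[OF m0] p v2
    by (auto intro!: payoff_le_if_bid_payoff_le)
qed

lemma nash_iff_admissible_weights:
  assumes "v2 \<le> v1" "0 < v2" and m: "2 \<le> m" and b: "0 < b" "b < real m"
    and sp: "strategy p" and sq: "strategy q" and "mean p = real m" and "mean q = b"
  shows "nash v1 v2 p q \<longleftrightarrow>
    real m = v2 / 2 \<and> v2 * (v2 - 2) / (2 * v1) \<le> b \<and> b \<le> v2 * (v2 + 2) / (2 * v1) \<and> p = UO m \<and>
    (\<exists>lO lE lU l. admissible_weights v1 v2 b m lO lE lU l \<and> q = mixture_Y b m lO lE lU l)"
  (is "_ \<longleftrightarrow> ?R")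
proof -
  have m0: "0 < m" and v1: "0 < v1"
    using assms by auto
  show ?thesis
  proof
    assume nash: "nash v1 v2 p q"
    have v2: "v2 = 2 * real m"
      using nash_payoffs[OF nash assms(1,2) m0 b assms(8,9)] by simp
    obtain lO lE lU l where weights: "admissible_weights v1 v2 b m lO lE lU l"
      and q: "q = mixture_Y b m lO lE lU l"
      using nash_imp_admissible_weights[OF nash assms(1,2) m b assms(8,9)] by blast
    then show ?R
      using weights_bounds[OF m v1 b(1) v2, of lO lE lU l] v2 nash_UO[OF nash assms(1,2) m0 b assms(8,9)]
      unfolding admissible_weights_def by auto
  next
    assume R: ?R
    then obtain lO lE lU l where "admissible_weights v1 v2 b m lO lE lU l"
      and "q = mixture_Y b m lO lE lU l"
      by blast
    moreover have "v2 = 2 * real m" "p = UO m"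
      using R by auto
    ultimately show "nash v1 v2 p q"
      using admissible_weights_imp_nash[OF m v1 b(1) _ sp sq] by blast
  qed
qed

theorem proposition5:
  fixes v1 v2 b :: real and m :: nat and p q :: "nat \<Rightarrow> real"
  assumes "v1 \<ge> v2" and "v2 > 0" and "m \<ge> 2" and "0 < b" and "b < real m"
    and "strategy p" and "strategy q"
    and "mean p = real m" and "mean q = b"
  shows "(nash v1 v2 p q \<longleftrightarrow>
            (real m = v2 / 2 \<and>
             v2 * (v2 - 2) / (2 * v1) \<le> b \<and> b \<le> v2 * (v2 + 2) / (2 * v1) \<and>
             p = UO m \<and>
             (\<exists>lO lE lU (l :: nat \<Rightarrow> real).
                0 \<le> lO \<and> 0 \<le> lE \<and> 0 \<le> lU \<and> (\<forall>j\<in>{1..m-1}. 0 \<le> l j) \<and>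
                lO + lE + lU + (\<Sum>j=1..m-1. l j) = 1 \<and>
                lU / (real m - 1) - lE / (real m + 1) = v2^2 / (2 * v1 * b) - 1 \<and>
                lO \<ge> v2 / (2 * b) * (v2 * (v2 + 2) / (2 * v1) + b - v2) \<and>
                q = (\<lambda>n. (1 - b / real m) * delta 0 n + b / real m *
                       (lO * UO m n + lE * UE m n + lU * UOup m n
                        + (\<Sum>j=1..m-1. l j * W m j n))))))
         \<and> (nash v1 v2 p q \<longrightarrow>
              payoff v1 p q = (v1 - v2) / 2 + v1 / v2 * (v2 / 2 - b) \<and>
              payoff v2 q p = 0)"
proof -
  have "0 < m"
    using assms(3) by simp
  then have "nash v1 v2 p q \<longrightarrow>
      payoff v1 p q = (v1 - v2) / 2 + v1 / v2 * (v2 / 2 - b) \<and> payoff v2 q p = 0"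
    using nash_payoffs[OF _ assms(1,2) _ assms(4,5,8,9)] by (auto simp: field_simps)
  then show ?thesis
    using nash_iff_admissible_weights[OF assms]
    unfolding admissible_weights_def mixture_Y_def by (simp add: conj_assoc)
qed

end
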